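(* Assume that the pair $(H,A)$ satisfies Condition G and let $\theta\in B^{\mathbb C}_{R'}(0)$. Then $D(H_\theta^* )=D(H)$ and $H_\theta^*=H_{\bar\theta}$.
   Context: $\mathcal H$ is a complex separable Hilbert space, $H$ and $A$ are self-adjoint on $\mathcal H$, and $U(t)=e^{\mathrm itA}$. Condition G: - (G1) $U(t)D(H)\subset D(H)$ for all real $t$, and $\sup_{|t|\le1}\|HU(t)\psi\|<\infty$ for every $\psi\in D(H)$. - (G2) The form $(\psi,\varphi)\mapsto\langle H\psi,A\varphi\rangle-\langle A\psi,H\varphi\rangle$ on $D(H)\cap D(A)$ is continuous with respect to $\|\psi\|_H+\|\varphi\|_H$, where $\|\psi\|_H=\|H\psi\|+\|\psi\|$. - (G3) There is $R>0$ such that for every $\psi\in D(H)$ the map $t\mapsto H_t\psi:=U(t)HU(-t)\psi$ extends analytically to the strip $\{|\operatorname{Im}\theta|<R\}$. This defines operators $H_\theta$ with domain $D(H)$. - (G4) $M:=\sup_{|\theta|<R}\|H_\theta(H+\mathrm i)^{-1}\|<\infty$. Put $C:=\max\{1,M\}/R$, $R':=1/(3C)$, and $B^{\mathbb C}_{R'}(0)=\{|\theta|<R'\}$. *)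

theory Defs
  imports "HOL-Analysis.Analysis"
begin

class chilbert = real_normed_vector + complete_space +
  fixes scaleC :: "complex \<Rightarrow> 'a \<Rightarrow> 'a"
    and cinner :: "'a \<Rightarrow> 'a \<Rightarrow> complex"
  assumes scaleC_of_real: "scaleC (complex_of_real r) x = r *\<^sub>R x"
    and scaleC_add_left: "scaleC (a + b) x = scaleC a x + scaleC b x"
    and scaleC_add_right: "scaleC a (x + y) = scaleC a x + scaleC a y"
    and scaleC_mult: "scaleC (a * b) x = scaleC a (scaleC b x)"
    and norm_scaleC: "norm (scaleC a x) = cmod a * norm x"
    and cinner_commute: "cinner x y = cnj (cinner y x)"
    and cinner_add_right: "cinner x (y + z) = cinner x y + cinner x z"
    and cinner_scaleC_right: "cinner x (scaleC a y) = a * cinner x y"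
    and norm_eq_cinner: "complex_of_real ((norm x)\<^sup>2) = cinner x x"

definition csubspace :: "'a::chilbert set \<Rightarrow> bool" where
  "csubspace S \<longleftrightarrow> 0 \<in> S \<and> (\<forall>x\<in>S. \<forall>y\<in>S. x + y \<in> S) \<and> (\<forall>c. \<forall>x\<in>S. scaleC c x \<in> S)"

definition lin_op :: "'a::chilbert set \<Rightarrow> ('a \<Rightarrow> 'a) \<Rightarrow> bool" where
  "lin_op D T \<longleftrightarrow> csubspace D \<and> (\<forall>x\<in>D. \<forall>y\<in>D. T (x + y) = T x + T y)
      \<and> (\<forall>c. \<forall>x\<in>D. T (scaleC c x) = scaleC c (T x))"

definition adj_dom :: "'a::chilbert set \<Rightarrow> ('a \<Rightarrow> 'a) \<Rightarrow> 'a set" where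
  "adj_dom D T = {\<phi>. \<exists>\<eta>. \<forall>\<psi>\<in>D. cinner (T \<psi>) \<phi> = cinner \<psi> \<eta>}"

definition adj_op :: "'a::chilbert set \<Rightarrow> ('a \<Rightarrow> 'a) \<Rightarrow> 'a \<Rightarrow> 'a" where
  "adj_op D T \<phi> = (THE \<eta>. \<forall>\<psi>\<in>D. cinner (T \<psi>) \<phi> = cinner \<psi> \<eta>)"

definition self_adjoint :: "'a::chilbert set \<Rightarrow> ('a \<Rightarrow> 'a) \<Rightarrow> bool" where
  "self_adjoint D T \<longleftrightarrow> lin_op D T \<and> closure D = UNIV \<and> adj_dom D T = D
      \<and> (\<forall>\<phi>\<in>D. adj_op D T \<phi> = T \<phi>)"

text \<open>\<open>U(t) = e^{itA}\<close>: the strongly continuous one-parameter unitary group whose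
generator is \<open>iA\<close> (exists and is unique for self-adjoint \<open>A\<close> by Stone's theorem).\<close>

definition is_exp_itA :: "'a::chilbert set \<Rightarrow> ('a \<Rightarrow> 'a) \<Rightarrow> (real \<Rightarrow> 'a \<Rightarrow> 'a) \<Rightarrow> bool" where
  "is_exp_itA DA A U \<longleftrightarrow>
     U 0 = id \<and> (\<forall>s t. U (s + t) = U s \<circ> U t)
     \<and> (\<forall>t. lin_op UNIV (U t) \<and> (\<forall>x. norm (U t x) = norm x) \<and> surj (U t))
     \<and> (\<forall>\<psi>. continuous_on UNIV (\<lambda>t. U t \<psi>))
     \<and> (\<forall>\<psi>. \<psi> \<in> DA \<longleftrightarrow> (\<exists>v. ((\<lambda>t. U t \<psi>) has_vector_derivative v) (at 0)))
     \<and> (\<forall>\<psi>\<in>DA. ((\<lambda>t. U t \<psi>) has_vector_derivative scaleC \<i> (A \<psi>)) (at 0))"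

definition vholomorphic_on :: "(complex \<Rightarrow> 'a::chilbert) \<Rightarrow> complex set \<Rightarrow> bool" where
  "vholomorphic_on f S \<longleftrightarrow> (\<forall>z\<in>S. \<exists>v. (f has_derivative (\<lambda>h. scaleC h v)) (at z))"

definition graph_norm :: "('a::chilbert \<Rightarrow> 'a) \<Rightarrow> 'a \<Rightarrow> real" where
  "graph_norm H \<psi> = norm (H \<psi>) + norm \<psi>"

definition res_i :: "'a::chilbert set \<Rightarrow> ('a \<Rightarrow> 'a) \<Rightarrow> 'a \<Rightarrow> 'a" where
  "res_i D H \<phi> = (THE \<psi>. \<psi> \<in> D \<and> H \<psi> + scaleC \<i> \<psi> = \<phi>)"

definition condG1 :: "'a::chilbert set \<Rightarrow> ('a \<Rightarrow> 'a) \<Rightarrow> (real \<Rightarrow> 'a \<Rightarrow> 'a) \<Rightarrow> bool" where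
  "condG1 DH H U \<longleftrightarrow> (\<forall>t. U t ` DH \<subseteq> DH)
     \<and> (\<forall>\<psi>\<in>DH. bdd_above ((\<lambda>t. norm (H (U t \<psi>))) ` {t. \<bar>t\<bar> \<le> 1}))"

definition condG2 :: "'a::chilbert set \<Rightarrow> ('a \<Rightarrow> 'a) \<Rightarrow> 'a set \<Rightarrow> ('a \<Rightarrow> 'a) \<Rightarrow> bool" where
  "condG2 DH H DA A \<longleftrightarrow>
     (let S = DH \<inter> DA; q = (\<lambda>\<psi> \<phi>. cinner (H \<psi>) (A \<phi>) - cinner (A \<psi>) (H \<phi>)) in
      \<forall>\<psi>0\<in>S. \<forall>\<phi>0\<in>S. \<forall>e>0. \<exists>d>0. \<forall>\<psi>\<in>S. \<forall>\<phi>\<in>S.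
        graph_norm H (\<psi> - \<psi>0) + graph_norm H (\<phi> - \<phi>0) < d \<longrightarrow> cmod (q \<psi> \<phi> - q \<psi>0 \<phi>0) < e)"

definition condG3 :: "'a::chilbert set \<Rightarrow> ('a \<Rightarrow> 'a) \<Rightarrow> (real \<Rightarrow> 'a \<Rightarrow> 'a) \<Rightarrow> real
     \<Rightarrow> (complex \<Rightarrow> 'a \<Rightarrow> 'a) \<Rightarrow> bool" where
  "condG3 DH H U R Hth \<longleftrightarrow> R > 0 \<and>
     (\<forall>\<psi>\<in>DH. vholomorphic_on (\<lambda>\<theta>. Hth \<theta> \<psi>) {\<theta>. \<bar>Im \<theta>\<bar> < R}
              \<and> (\<forall>t::real. Hth (complex_of_real t) \<psi> = U t (H (U (- t) \<psi>))))"

definition G4_set :: "'a::chilbert set \<Rightarrow> ('a \<Rightarrow> 'a) \<Rightarrow> real \<Rightarrow> (complex \<Rightarrow> 'a \<Rightarrow> 'a) \<Rightarrow> real set" where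
  "G4_set DH H R Hth = {norm (Hth \<theta> (res_i DH H \<phi>)) | \<theta> \<phi>. cmod \<theta> < R \<and> norm \<phi> \<le> 1}"

definition condG4 :: "'a::chilbert set \<Rightarrow> ('a \<Rightarrow> 'a) \<Rightarrow> real \<Rightarrow> (complex \<Rightarrow> 'a \<Rightarrow> 'a) \<Rightarrow> bool" where
  "condG4 DH H R Hth \<longleftrightarrow> bdd_above (G4_set DH H R Hth)"

definition G4_M :: "'a::chilbert set \<Rightarrow> ('a \<Rightarrow> 'a) \<Rightarrow> real \<Rightarrow> (complex \<Rightarrow> 'a \<Rightarrow> 'a) \<Rightarrow> real" where
  "G4_M DH H R Hth = Sup (G4_set DH H R Hth)"

end

theory Submission
  imports Defs "HOL-Complex_Analysis.Complex_Analysis"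
begin

text \<open>For real \<open>\<theta> = t\<close> the operator \<open>H\<^sub>t = U(t) H U(-t)\<close> is linear and symmetric on
  \<open>D(H)\<close>. By the identity theorem these properties extend to the strip, the second one in the
  form \<open>\<langle>H\<^sub>\<theta> \<psi>, \<phi>\<rangle> = \<langle>\<psi>, H\<^bsub>cnj \<theta>\<^esub> \<phi>\<rangle>\<close>. Schwarz's lemma, applied to \<open>\<theta> \<mapsto> H\<^sub>\<theta>\<psi> - H\<psi>\<close> on
  the disc of radius \<open>R\<close> where (G4) bounds it, gives
  \<open>\<parallel>(H\<^sub>\<theta> - H)\<psi>\<parallel> \<le> 2 C |\<theta>| \<parallel>(H + i)\<psi>\<parallel>\<close>, and \<open>2 C |\<theta>| < 2/3\<close> for \<open>|\<theta>| < R'\<close>. A contraction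
  argument then makes \<open>H\<^sub>\<theta> + i\<close> and \<open>H\<^bsub>cnj \<theta>\<^esub> - i\<close> surjective, and for a formally
  adjoint pair this forces \<open>H\<^sub>\<theta>\<^sup>* = H\<^bsub>cnj \<theta>\<^esub>\<close>.\<close>

section \<open>Algebra of the inner product\<close>

interpretation scaleC: module "scaleC :: complex \<Rightarrow> 'a::chilbert \<Rightarrow> 'a"
  by unfold_locales
    (simp_all add: scaleC_add_right scaleC_add_left scaleC_mult scaleC_of_real[of 1, simplified])

lemma cinner_zero_right [simp]: "cinner x 0 = 0"
  using cinner_add_right[of x 0 0] by simp

lemma cinner_zero_left [simp]: "cinner 0 x = 0"
  using cinner_commute[of 0 x] by simp

lemma cinner_add_left: "cinner (x + y) z = cinner x z + cinner y z"
  by (simp add: cinner_commute[of "x + y" z] cinner_commute[of x z] cinner_commute[of y z]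
      cinner_add_right)

lemma cinner_scaleC_left: "cinner (scaleC a x) y = cnj a * cinner x y"
  by (simp add: cinner_commute[of "scaleC a x" y] cinner_commute[of x y] cinner_scaleC_right)

lemma cinner_diff_right: "cinner x (y - z) = cinner x y - cinner x z"
  using cinner_add_right[of x y "- z"] cinner_scaleC_right[of x "- 1" z] by simp

lemma cinner_diff_left: "cinner (x - y) z = cinner x z - cinner y z"
  using cinner_add_left[of x "- y" z] cinner_scaleC_left[of "- 1" y z] by simp

lemma cinner_self_eq_zero_iff [simp]: "cinner x x = 0 \<longleftrightarrow> x = 0"
  by (simp flip: norm_eq_cinner)

lemma norm_sq_add:
  "complex_of_real ((norm (x + y))\<^sup>2)
     = complex_of_real ((norm x)\<^sup>2) + complex_of_real ((norm y)\<^sup>2) + cinner x y + cnj (cinner x y)"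
  unfolding norm_eq_cinner by (simp add: cinner_add_left cinner_add_right cinner_commute[of y x])

lemma norm_sq_diff:
  "complex_of_real ((norm (x - y))\<^sup>2)
     = complex_of_real ((norm x)\<^sup>2) + complex_of_real ((norm y)\<^sup>2) - cinner x y - cnj (cinner x y)"
  unfolding norm_eq_cinner
  by (simp add: cinner_diff_left cinner_diff_right cinner_commute[of y x])

lemma norm_sq_sub_projection:
  assumes "y \<noteq> 0"
  shows "(norm (x - scaleC (cinner y x / cinner y y) y))\<^sup>2
           = (norm x)\<^sup>2 - (cmod (cinner x y))\<^sup>2 / (norm y)\<^sup>2"
proof -
  define t where "t = cinner y x / cinner y y"
  have yy: "cinner y y = complex_of_real ((norm y)\<^sup>2)" by (rule norm_eq_cinner[symmetric])
  have "t * cinner y y = cinner y x"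
    using assms by (simp add: t_def)
  then have "cinner (x - scaleC t y) (x - scaleC t y) = cinner x x - t * cinner x y"
    by (simp add: cinner_diff_left cinner_diff_right cinner_scaleC_left cinner_scaleC_right
        algebra_simps flip: cinner_commute[of x y])
  also have "t * cinner x y = complex_of_real ((cmod (cinner x y))\<^sup>2 / (norm y)\<^sup>2)"
    unfolding t_def yy cinner_commute[of y x]
    by (simp add: complex_norm_square[symmetric] mult.commute)
  finally show ?thesis
    unfolding t_def[symmetric] by (metis norm_eq_cinner of_real_diff of_real_eq_iff)
qed

lemma cinner_Cauchy_Schwarz: "cmod (cinner x y) \<le> norm x * norm y"
proof (cases "y = 0")
  case False
  then have "(cmod (cinner x y))\<^sup>2 / (norm y)\<^sup>2 \<le> (norm x)\<^sup>2"
    using norm_sq_sub_projection[OF False, of x] by (metis diff_ge_0_iff_ge zero_le_power2)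
  then have "(cmod (cinner x y))\<^sup>2 \<le> (norm x * norm y)\<^sup>2"
    using False by (simp add: field_simps power_mult_distrib)
  then show ?thesis
    by (meson mult_nonneg_nonneg norm_ge_zero power2_le_imp_le)
qed simp

lemma bounded_linear_cinner_right: "bounded_linear (cinner x)"
proof
  show "\<exists>K. \<forall>y. norm (cinner x y) \<le> norm y * K"
    using cinner_Cauchy_Schwarz by (metis mult.commute)
qed (simp_all add: cinner_add_right cinner_scaleC_right scaleR_conv_of_real flip: scaleC_of_real)

lemma bounded_linear_cinner_left: "bounded_linear (\<lambda>y. cinner y x)"
proof
  show "\<exists>K. \<forall>y. norm (cinner y x) \<le> norm y * K"
    using cinner_Cauchy_Schwarz by (metis mult.commute)
qed (simp_all add: cinner_add_left cinner_scaleC_left scaleR_conv_of_real flip: scaleC_of_real)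

lemma bounded_linear_scaleC: "bounded_linear (scaleC c :: 'a::chilbert \<Rightarrow> 'a)"
proof
  show "\<exists>K. \<forall>x::'a. norm (scaleC c x) \<le> norm x * K"
    by (rule exI[of _ "cmod c"]) (simp add: norm_scaleC mult.commute)
qed (simp_all add: scaleC_add_right mult.commute flip: scaleC_of_real)

lemma parallelogram_law:
  "(norm (x + y :: 'a::chilbert))\<^sup>2 + (norm (x - y))\<^sup>2 = 2 * (norm x)\<^sup>2 + 2 * (norm y)\<^sup>2"
proof -
  have "complex_of_real ((norm (x + y))\<^sup>2 + (norm (x - y))\<^sup>2)
          = complex_of_real (2 * (norm x)\<^sup>2 + 2 * (norm y)\<^sup>2)"
    using norm_sq_add[of x y] norm_sq_diff[of x y] by simp
  then show ?thesis using of_real_eq_iff by blast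
qed

lemma isometry_preserves_cinner:
  assumes lin: "lin_op UNIV T" and isom: "\<And>x. norm (T x) = norm x"
  shows "cinner (T x) (T y) = cinner x y"
proof -
  have add: "\<And>a b. T (a + b) = T a + T b" and scale: "\<And>c a. T (scaleC c a) = scaleC c (T a)"
    using lin unfolding lin_op_def by auto
  have polar: "cinner (T x) (T z) + cnj (cinner (T x) (T z)) = cinner x z + cnj (cinner x z)" for z
    using norm_sq_add[of x z] norm_sq_add[of "T x" "T z"] isom[of "x + z"] isom[of x] isom[of z]
      add[of x z]
    by simp
  have "Re (cinner (T x) (T y)) = Re (cinner x y)"
    using arg_cong[OF polar[of y], of Re] by simp
  moreover have "Im (cinner (T x) (T y)) = Im (cinner x y)"
    using arg_cong[OF polar[of "scaleC \<i> y"], of Re] by (simp add: scale cinner_scaleC_right)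
  ultimately show ?thesis by (rule complex_eqI)
qed

section \<open>Projection onto closed subspaces\<close>

lemma csubspaceD:
  assumes "csubspace V"
  shows "0 \<in> V" "\<And>x y. x \<in> V \<Longrightarrow> y \<in> V \<Longrightarrow> x + y \<in> V"
    "\<And>c x. x \<in> V \<Longrightarrow> scaleC c x \<in> V" "\<And>r x. x \<in> V \<Longrightarrow> r *\<^sub>R x \<in> V"
  using assms unfolding csubspace_def by (auto simp flip: scaleC_of_real)

lemma norm_sq_diff_midpoint:
  fixes a b y :: "'a::chilbert"
  shows "(norm (a - b))\<^sup>2
     = 2 * (norm (y - a))\<^sup>2 + 2 * (norm (y - b))\<^sup>2 - 4 * (norm (y - (1/2) *\<^sub>R (a + b)))\<^sup>2"
proof -
  have "(y - a) + (y - b) = 2 *\<^sub>R (y - (1/2) *\<^sub>R (a + b))" "(y - a) - (y - b) = b - a"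
    by (simp_all add: algebra_simps scaleR_2)
  then show ?thesis
    using parallelogram_law[of "y - a" "y - b"]
    by (simp add: power_mult_distrib norm_minus_commute)
qed

lemma Cauchy_if_norm_diff_sq_le:
  fixes vs :: "nat \<Rightarrow> 'a::real_normed_vector"
  assumes le: "\<And>m n. (norm (vs m - vs n))\<^sup>2 \<le> \<epsilon> m + \<epsilon> n" and lim: "\<epsilon> \<longlonglongrightarrow> 0"
  shows "Cauchy vs"
proof (rule metric_CauchyI)
  fix e :: real assume "0 < e"
  then obtain N where N: "\<And>n. n \<ge> N \<Longrightarrow> \<bar>\<epsilon> n\<bar> < e\<^sup>2 / 2"
    using lim unfolding LIMSEQ_def dist_real_def by (metis diff_zero half_gt_zero zero_less_power)
  have "(dist (vs m) (vs n))\<^sup>2 < e\<^sup>2" if "m \<ge> N" "n \<ge> N" for m n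
    using le[of m n] N[OF that(1)] N[OF that(2)] by (simp add: dist_norm)
  then show "\<exists>N. \<forall>m\<ge>N. \<forall>n\<ge>N. dist (vs m) (vs n) < e"
    using \<open>0 < e\<close> by (meson less_le power_less_imp_less_base)
qed

lemma Cauchy_if_dominated:
  fixes a :: "nat \<Rightarrow> 'a::real_normed_vector" and b :: "nat \<Rightarrow> 'b::real_normed_vector"
  assumes b: "Cauchy b" and C: "C > 0" and le: "\<And>m n. norm (a m - a n) \<le> C * norm (b m - b n)"
  shows "Cauchy a"
proof (rule metric_CauchyI)
  fix e :: real assume "0 < e"
  with C have "e / C > 0" by simp
  then obtain N where N: "\<forall>m\<ge>N. \<forall>n\<ge>N. dist (b m) (b n) < e / C"
    using b unfolding Cauchy_def by blast
  have "dist (a m) (a n) < e" if "m \<ge> N" "n \<ge> N" for m n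
  proof -
    have "C * norm (b m - b n) < e"
      using N that C
      by (simp add: dist_norm pos_less_divide_eq mult.commute)
    then show ?thesis
      using le[of m n] by (simp add: dist_norm)
  qed
  then show "\<exists>N. \<forall>m\<ge>N. \<forall>n\<ge>N. dist (a m) (a n) < e" by blast
qed

lemma minimizing_sequence_Cauchy:
  fixes V :: "'a::chilbert set"
  assumes sub: "csubspace V" and d_le: "\<And>v. v \<in> V \<Longrightarrow> d \<le> norm (y - v)" and d0: "0 \<le> d"
    and vs: "\<And>n. vs n \<in> V" and vs_sq: "\<And>n. (norm (y - vs n))\<^sup>2 < d\<^sup>2 + inverse (real (Suc n))"
  shows "Cauchy vs"
proof (rule Cauchy_if_norm_diff_sq_le[where \<epsilon> = "\<lambda>n. 2 * inverse (real (Suc n))"])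
  show "(norm (vs m - vs n))\<^sup>2 \<le> 2 * inverse (real (Suc m)) + 2 * inverse (real (Suc n))" for m n
  proof -
    have "d \<le> norm (y - (1/2) *\<^sub>R (vs m + vs n))"
      using vs csubspaceD[OF sub] by (intro d_le) blast
    then have "4 * d\<^sup>2 \<le> 4 * (norm (y - (1/2) *\<^sub>R (vs m + vs n)))\<^sup>2"
      using d0 by (simp add: power_mono)
    then show ?thesis
      using norm_sq_diff_midpoint[of "vs m" "vs n" y] vs_sq[of m] vs_sq[of n] by linarith
  qed
  show "(\<lambda>n. 2 * inverse (real (Suc n))) \<longlonglongrightarrow> 0"
    by (intro tendsto_mult_right_zero LIMSEQ_inverse_real_of_nat)
qed

lemma nearest_point_exists:
  fixes V :: "'a::chilbert set"
  assumes sub: "csubspace V" and cl: "closed V"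
  obtains p where "p \<in> V" "\<And>v. v \<in> V \<Longrightarrow> norm (y - p) \<le> norm (y - v)"
proof -
  define d where "d = Inf ((\<lambda>v. norm (y - v)) ` V)"
  have d_le: "d \<le> norm (y - v)" if "v \<in> V" for v
    unfolding d_def by (rule cInf_lower) (use that in \<open>auto intro!: bdd_belowI[of _ 0]\<close>)
  have d0: "0 \<le> d"
    unfolding d_def using csubspaceD(1)[OF sub] by (intro cInf_greatest) auto
  have "\<exists>v\<in>V. (norm (y - v))\<^sup>2 < d\<^sup>2 + inverse (real (Suc n))" for n
  proof -
    define e where "e = sqrt (d\<^sup>2 + inverse (real (Suc n)))"
    have e_sq: "e\<^sup>2 = d\<^sup>2 + inverse (real (Suc n))"
      unfolding e_def by simp
    have "d < e"
      unfolding e_def by (intro real_less_rsqrt) simp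
    then obtain v where "v \<in> V" "norm (y - v) < e"
      using cInf_lessD[of "(\<lambda>v. norm (y - v)) ` V" e] csubspaceD(1)[OF sub]
      unfolding d_def by auto
    moreover from this have "(norm (y - v))\<^sup>2 < e\<^sup>2"
      by (intro power_strict_mono) simp_all
    ultimately show ?thesis
      unfolding e_sq by blast
  qed
  then obtain vs where vs: "\<And>n. vs n \<in> V"
    and vs_sq: "\<And>n. (norm (y - vs n))\<^sup>2 < d\<^sup>2 + inverse (real (Suc n))"
    by metis
  have "Cauchy vs"
    using minimizing_sequence_Cauchy[OF sub d_le d0 vs vs_sq] .
  then obtain p where p: "vs \<longlonglongrightarrow> p"
    using Cauchy_convergent convergent_def by blast
  have "(\<lambda>n. (norm (y - vs n))\<^sup>2) \<longlonglongrightarrow> (norm (y - p))\<^sup>2"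
    by (intro tendsto_intros p)
  moreover have "(\<lambda>n. d\<^sup>2 + inverse (real (Suc n))) \<longlonglongrightarrow> d\<^sup>2 + 0"
    by (intro tendsto_intros LIMSEQ_inverse_real_of_nat)
  ultimately have "(norm (y - p))\<^sup>2 \<le> d\<^sup>2"
    using vs_sq by (intro LIMSEQ_le) (auto intro: less_imp_le)
  then have "norm (y - p) \<le> d"
    using d0 by (rule power2_le_imp_le)
  show ?thesis
  proof (rule that)
    show "p \<in> V"
      using closed_sequentially[OF cl] vs p by blast
    show "norm (y - p) \<le> norm (y - v)" if "v \<in> V" for v
      using \<open>norm (y - p) \<le> d\<close> d_le[OF that] by (rule order_trans)
  qed
qed

lemma nearest_point_orthogonal:
  fixes V :: "'a::chilbert set"
  assumes sub: "csubspace V" and p: "p \<in> V"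
    and nearest: "\<And>v. v \<in> V \<Longrightarrow> norm (y - p) \<le> norm (y - v)" and v: "v \<in> V"
  shows "cinner v (y - p) = 0"
proof (cases "v = 0")
  case False
  define z where "z = y - p"
  have "p + scaleC (cinner v z / cinner v v) v \<in> V"
    using p v csubspaceD[OF sub] by blast
  then have "(norm z)\<^sup>2 \<le> (norm (z - scaleC (cinner v z / cinner v v) v))\<^sup>2"
    using nearest unfolding z_def by (force simp: algebra_simps intro: power_mono)
  then have "(cmod (cinner z v))\<^sup>2 / (norm v)\<^sup>2 \<le> 0"
    using norm_sq_sub_projection[OF False, of z] by linarith
  then have "cinner z v = 0"
    using False by (simp add: divide_le_0_iff)
  then show ?thesis
    unfolding z_def by (metis cinner_commute complex_cnj_zero)
qed simp

lemma csubspace_eq_UNIV_if_orthogonal_trivial: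
  fixes V :: "'a::chilbert set"
  assumes sub: "csubspace V" and cl: "closed V"
    and perp: "\<And>z. \<forall>v\<in>V. cinner v z = 0 \<Longrightarrow> z = 0"
  shows "V = UNIV"
proof -
  have "y \<in> V" for y
  proof -
    obtain p where "p \<in> V" "\<And>v. v \<in> V \<Longrightarrow> norm (y - p) \<le> norm (y - v)"
      using nearest_point_exists[OF sub cl, of y] by blast
    then have "y - p = 0"
      using perp nearest_point_orthogonal[OF sub] by blast
    with \<open>p \<in> V\<close> show ?thesis by simp
  qed
  then show ?thesis by blast
qed

section \<open>Adjoints and self-adjoint operators\<close>

lemma eq_if_cinner_eq_on_dense:
  fixes D :: "'a::chilbert set"
  assumes dense: "closure D = UNIV" and eq: "\<forall>\<psi>\<in>D. cinner \<psi> a = cinner \<psi> b"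
  shows "a = b"
proof -
  have "closed {\<psi>. cinner \<psi> (a - b) = 0}"
    using linear_continuous_on[OF bounded_linear_cinner_left]
    by (intro closed_Collect_eq) auto
  moreover have "D \<subseteq> {\<psi>. cinner \<psi> (a - b) = 0}"
    using eq by (simp add: subset_eq cinner_diff_right)
  ultimately have "closure D \<subseteq> {\<psi>. cinner \<psi> (a - b) = 0}"
    by (intro closure_minimal)
  then have "cinner (a - b) (a - b) = 0"
    using dense by blast
  then show ?thesis by simp
qed

lemma adj_op_eqI:
  fixes D :: "'a::chilbert set"
  assumes dense: "closure D = UNIV" and eta: "\<forall>\<psi>\<in>D. cinner (T \<psi>) \<phi> = cinner \<psi> \<eta>"
  shows "\<phi> \<in> adj_dom D T" and "adj_op D T \<phi> = \<eta>"
proof -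
  show "\<phi> \<in> adj_dom D T"
    using eta unfolding adj_dom_def by blast
  show "adj_op D T \<phi> = \<eta>"
    unfolding adj_op_def
  proof (rule the_equality)
    fix \<eta>' assume eta': "\<forall>\<psi>\<in>D. cinner (T \<psi>) \<phi> = cinner \<psi> \<eta>'"
    show "\<eta>' = \<eta>"
      by (rule eq_if_cinner_eq_on_dense[OF dense]) (use eta eta' in auto)
  qed (rule eta)
qed

lemma lin_opD:
  assumes "lin_op D T"
  shows "csubspace D" "\<And>x y. x \<in> D \<Longrightarrow> y \<in> D \<Longrightarrow> T (x + y) = T x + T y"
    "\<And>c x. x \<in> D \<Longrightarrow> T (scaleC c x) = scaleC c (T x)"
  using assms unfolding lin_op_def by auto

lemma lin_op_diff:
  assumes lin: "lin_op D T" and "x \<in> D" "y \<in> D"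
  shows "x - y \<in> D" "T (x - y) = T x - T y"
proof -
  have minus_y: "- y \<in> D" "T (- y) = - T y"
    using csubspaceD(3)[OF lin_opD(1)[OF lin] \<open>y \<in> D\<close>, of "- 1"]
      lin_opD(3)[OF lin \<open>y \<in> D\<close>, of "- 1"]
    by simp_all
  show "x - y \<in> D" "T (x - y) = T x - T y"
    using csubspaceD(2)[OF lin_opD(1)[OF lin] \<open>x \<in> D\<close> minus_y(1)]
      lin_opD(2)[OF lin \<open>x \<in> D\<close> minus_y(1)] minus_y(2)
    by simp_all
qed

lemma lin_op_zero:
  assumes "lin_op D T"
  shows "T 0 = 0"
  using lin_opD(3)[OF assms csubspaceD(1)[OF lin_opD(1)[OF assms]], of 0] by simp

lemma self_adjointD:
  assumes "self_adjoint D H"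
  shows "lin_op D H" "closure D = UNIV"
    "\<And>\<phi> \<eta>. \<forall>\<psi>\<in>D. cinner (H \<psi>) \<phi> = cinner \<psi> \<eta> \<Longrightarrow> \<phi> \<in> D \<and> H \<phi> = \<eta>"
proof -
  show lin: "lin_op D H" and dense: "closure D = UNIV"
    using assms unfolding self_adjoint_def by auto
  have dom: "adj_dom D H = D" and op: "\<And>\<phi>. \<phi> \<in> D \<Longrightarrow> adj_op D H \<phi> = H \<phi>"
    using assms unfolding self_adjoint_def by auto
  fix \<phi> \<eta> assume eta: "\<forall>\<psi>\<in>D. cinner (H \<psi>) \<phi> = cinner \<psi> \<eta>"
  have "\<phi> \<in> D"
    using adj_op_eqI(1)[OF dense eta] dom by simp
  moreover have "H \<phi> = \<eta>"
    using adj_op_eqI(2)[OF dense eta] op[OF \<open>\<phi> \<in> D\<close>] by simp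
  ultimately show "\<phi> \<in> D \<and> H \<phi> = \<eta>" ..
qed

lemma self_adjoint_symmetric:
  assumes sa: "self_adjoint D H" and "\<psi> \<in> D" "\<phi> \<in> D"
  shows "cinner (H \<psi>) \<phi> = cinner \<psi> (H \<phi>)"
proof -
  have "\<phi> \<in> adj_dom D H"
    using \<open>\<phi> \<in> D\<close> sa unfolding self_adjoint_def by simp
  then obtain \<eta> where \<eta>: "\<forall>\<psi>\<in>D. cinner (H \<psi>) \<phi> = cinner \<psi> \<eta>"
    unfolding adj_dom_def by blast
  then have "H \<phi> = \<eta>"
    using self_adjointD(3)[OF sa] by blast
  with \<eta> \<open>\<psi> \<in> D\<close> show ?thesis by simp
qed

lemma self_adjoint_closed_graph:
  assumes sa: "self_adjoint D H" and ps: "\<And>n. ps n \<in> D"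
    and q: "ps \<longlonglongrightarrow> q" and h: "(\<lambda>n. H (ps n)) \<longlonglongrightarrow> h"
  shows "q \<in> D" "H q = h"
proof -
  have "cinner (H \<phi>) q = cinner \<phi> h" if "\<phi> \<in> D" for \<phi>
  proof (rule LIMSEQ_unique)
    show "(\<lambda>n. cinner (H \<phi>) (ps n)) \<longlonglongrightarrow> cinner (H \<phi>) q"
      using bounded_linear.tendsto[OF bounded_linear_cinner_right q] .
    show "(\<lambda>n. cinner (H \<phi>) (ps n)) \<longlonglongrightarrow> cinner \<phi> h"
      using bounded_linear.tendsto[OF bounded_linear_cinner_right h]
      by (simp add: self_adjoint_symmetric[OF sa that ps])
  qed
  then show "q \<in> D" "H q = h"
    using self_adjointD(3)[OF sa] by blast+
qed

lemma norm_sq_self_adjoint_shift: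
  assumes sa: "self_adjoint D H" and \<psi>: "\<psi> \<in> D"
  shows "(norm (H \<psi> + scaleC (of_real s * \<i>) \<psi>))\<^sup>2 = (norm (H \<psi>))\<^sup>2 + s\<^sup>2 * (norm \<psi>)\<^sup>2"
proof -
  \<comment> \<open>The cross term \<open>2 Re \<langle>H\<psi>, is\<psi>\<rangle>\<close> vanishes because \<open>\<langle>H\<psi>, \<psi>\<rangle>\<close> is real.\<close>
  have "cnj (cinner (H \<psi>) \<psi>) = cinner (H \<psi>) \<psi>"
    using self_adjoint_symmetric[OF sa \<psi> \<psi>] cinner_commute[of \<psi> "H \<psi>"] by simp
  then have "cinner (H \<psi>) (scaleC (of_real s * \<i>) \<psi>) + cnj (cinner (H \<psi>) (scaleC (of_real s * \<i>) \<psi>)) = 0"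
    by (simp add: cinner_scaleC_right)
  then have "complex_of_real ((norm (H \<psi> + scaleC (of_real s * \<i>) \<psi>))\<^sup>2)
      = complex_of_real ((norm (H \<psi>))\<^sup>2 + (norm (scaleC (of_real s * \<i>) \<psi>))\<^sup>2)"
    using norm_sq_add[of "H \<psi>" "scaleC (of_real s * \<i>) \<psi>"] by (simp add: algebra_simps)
  then show ?thesis
    by (simp only: of_real_eq_iff) (simp add: norm_scaleC norm_mult power_mult_distrib)
qed

lemma norm_le_norm_self_adjoint_shift:
  assumes sa: "self_adjoint D H" and \<psi>: "\<psi> \<in> D"
  shows "\<bar>s\<bar> * norm \<psi> \<le> norm (H \<psi> + scaleC (of_real s * \<i>) \<psi>)"
    and "norm (H \<psi>) \<le> norm (H \<psi> + scaleC (of_real s * \<i>) \<psi>)"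
proof -
  have "(\<bar>s\<bar> * norm \<psi>)\<^sup>2 \<le> (norm (H \<psi> + scaleC (of_real s * \<i>) \<psi>))\<^sup>2"
    "(norm (H \<psi>))\<^sup>2 \<le> (norm (H \<psi> + scaleC (of_real s * \<i>) \<psi>))\<^sup>2"
    by (simp_all add: norm_sq_self_adjoint_shift[OF sa \<psi>] power_mult_distrib)
  then show "\<bar>s\<bar> * norm \<psi> \<le> norm (H \<psi> + scaleC (of_real s * \<i>) \<psi>)"
    "norm (H \<psi>) \<le> norm (H \<psi> + scaleC (of_real s * \<i>) \<psi>)"
    by (meson norm_ge_zero power2_le_imp_le)+
qed

abbreviation shift_range :: "'a::chilbert set \<Rightarrow> ('a \<Rightarrow> 'a) \<Rightarrow> complex \<Rightarrow> 'a set" where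
  "shift_range D H c \<equiv> (\<lambda>\<psi>. H \<psi> + scaleC c \<psi>) ` D"

lemma csubspace_shift_range:
  assumes lin: "lin_op D H"
  shows "csubspace (shift_range D H c)"
proof -
  note D = csubspaceD[OF lin_opD(1)[OF lin]]
  have "0 \<in> shift_range D H c"
    using D(1) lin_op_zero[OF lin] by (auto intro!: image_eqI[of _ _ 0])
  moreover have "x + y \<in> shift_range D H c"
    if x: "x \<in> shift_range D H c" and y: "y \<in> shift_range D H c" for x y
  proof -
    obtain a b where ab: "a \<in> D" "b \<in> D" and "x = H a + scaleC c a" "y = H b + scaleC c b"
      using x y by blast
    then have "x + y = H (a + b) + scaleC c (a + b)"
      using lin_opD(2)[OF lin ab] by (simp add: scaleC_add_right add_ac)
    then show ?thesis
      using D(2)[OF ab] by blast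
  qed
  moreover have "scaleC a x \<in> shift_range D H c" if x: "x \<in> shift_range D H c" for a x
  proof -
    obtain b where b: "b \<in> D" and "x = H b + scaleC c b"
      using x by blast
    then have "scaleC a x = H (scaleC a b) + scaleC c (scaleC a b)"
      using lin_opD(3)[OF lin b] by (simp add: scaleC_add_right mult.commute)
    then show ?thesis
      using D(3)[OF b] by blast
  qed
  ultimately show ?thesis
    unfolding csubspace_def by blast
qed

lemma closed_shift_range:
  assumes sa: "self_adjoint D H" and s: "s \<noteq> 0"
  shows "closed (shift_range D H (of_real s * \<i>))"
proof -
  define c where "c = complex_of_real s * \<i>"
  have lin: "lin_op D H"
    using self_adjointD(1)[OF sa] .
  have "l \<in> shift_range D H c" if xs: "\<forall>n. x n \<in> shift_range D H c" and xl: "x \<longlonglongrightarrow> l"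
    for x l
  proof -
    have "\<forall>n. \<exists>p. p \<in> D \<and> x n = H p + scaleC c p"
      using xs by blast
    then obtain ps where "\<forall>n. ps n \<in> D \<and> x n = H (ps n) + scaleC c (ps n)"
      using choice[of "\<lambda>n p. p \<in> D \<and> x n = H p + scaleC c p"] by blast
    then have ps: "\<And>n. ps n \<in> D" and x: "x = (\<lambda>n. H (ps n) + scaleC c (ps n))"
      by auto
    have x_diff: "x m - x n = H (ps m - ps n) + scaleC c (ps m - ps n)" for m n
      unfolding x using lin_op_diff(2)[OF lin ps ps]
      by (simp add: scaleC.scale_right_diff_distrib)
    have "Cauchy x"
      using xl by (rule LIMSEQ_imp_Cauchy)
    have ps_bound: "norm (ps m - ps n) \<le> 1 / \<bar>s\<bar> * norm (x m - x n)" for m n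
      using norm_le_norm_self_adjoint_shift(1)[OF sa lin_op_diff(1)[OF lin ps ps], where s = s] s
      by (simp add: x_diff c_def pos_le_divide_eq mult.commute)
    have "Cauchy ps"
      using Cauchy_if_dominated[OF \<open>Cauchy x\<close> _ ps_bound] s by simp
    then obtain q where q: "ps \<longlonglongrightarrow> q"
      using Cauchy_convergent convergent_def by blast
    have H_bound: "norm (H (ps m) - H (ps n)) \<le> 1 * norm (x m - x n)" for m n
      using norm_le_norm_self_adjoint_shift(2)[OF sa lin_op_diff(1)[OF lin ps ps], where s = s]
      by (simp add: x_diff c_def lin_op_diff(2)[OF lin ps ps])
    have "Cauchy (\<lambda>n. H (ps n))"
      using Cauchy_if_dominated[OF \<open>Cauchy x\<close> _ H_bound] by simp
    then obtain h where h: "(\<lambda>n. H (ps n)) \<longlonglongrightarrow> h"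
      using Cauchy_convergent convergent_def by blast
    have "x \<longlonglongrightarrow> H q + scaleC c q"
      unfolding x self_adjoint_closed_graph(2)[OF sa ps q h]
      by (intro tendsto_add h bounded_linear.tendsto[OF bounded_linear_scaleC q])
    then show ?thesis
      using xl LIMSEQ_unique self_adjoint_closed_graph(1)[OF sa ps q h] by blast
  qed
  then show ?thesis
    unfolding closed_sequential_limits c_def by blast
qed

lemma orthogonal_shift_range_trivial:
  assumes sa: "self_adjoint D H" and s: "s \<noteq> 0"
    and z: "\<forall>v\<in>shift_range D H (of_real s * \<i>). cinner v z = 0"
  shows "z = 0"
proof -
  define c where "c = complex_of_real s * \<i>"
  have "cinner (H \<psi>) z = cinner \<psi> (scaleC c z)" if "\<psi> \<in> D" for \<psi>
  proof -
    have "cinner (H \<psi> + scaleC c \<psi>) z = 0"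
      using z that unfolding c_def by blast
    then have "cinner (H \<psi>) z = - cinner (scaleC c \<psi>) z"
      by (simp add: cinner_add_left eq_neg_iff_add_eq_0)
    also have "\<dots> = cinner \<psi> (scaleC c z)"
      by (simp add: cinner_scaleC_left cinner_scaleC_right c_def)
    finally show ?thesis .
  qed
  then have zD: "z \<in> D" and Hz: "H z = scaleC c z"
    using self_adjointD(3)[OF sa] by blast+
  have "cnj c * cinner z z = c * cinner z z"
    using self_adjoint_symmetric[OF sa zD zD] by (simp add: Hz cinner_scaleC_left cinner_scaleC_right)
  moreover have "cnj c \<noteq> c"
    using s by (simp add: c_def complex_eq_iff)
  ultimately show "z = 0" by simp
qed

lemma self_adjoint_shift_surj:
  assumes sa: "self_adjoint D H" and s: "s \<noteq> 0"
  shows "\<exists>\<psi>\<in>D. H \<psi> + scaleC (of_real s * \<i>) \<psi> = y"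
proof -
  have "shift_range D H (of_real s * \<i>) = UNIV"
    using csubspace_shift_range[OF self_adjointD(1)[OF sa]] closed_shift_range[OF sa s]
      orthogonal_shift_range_trivial[OF sa s]
    by (rule csubspace_eq_UNIV_if_orthogonal_trivial)
  then have "y \<in> shift_range D H (of_real s * \<i>)"
    by simp
  then show ?thesis
    by blast
qed

lemma self_adjoint_shift_right_inverse:
  assumes sa: "self_adjoint D H" and s: "s \<noteq> 0"
  obtains Rs where "\<And>x. Rs x \<in> D" "\<And>x. H (Rs x) + scaleC (of_real s * \<i>) (Rs x) = x"
proof -
  have "\<forall>x. \<exists>\<psi>. \<psi> \<in> D \<and> H \<psi> + scaleC (of_real s * \<i>) \<psi> = x"
    using self_adjoint_shift_surj[OF sa s] by blast
  then obtain Rs where "\<forall>x. Rs x \<in> D \<and> H (Rs x) + scaleC (of_real s * \<i>) (Rs x) = x"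
    using choice[of "\<lambda>x \<psi>. \<psi> \<in> D \<and> H \<psi> + scaleC (of_real s * \<i>) \<psi> = x"] by blast
  then show ?thesis
    using that by blast
qed

lemma norm_self_adjoint_shift_unit:
  assumes sa: "self_adjoint D H" and \<psi>: "\<psi> \<in> D" and s: "\<bar>s\<bar> = 1"
  shows "norm (H \<psi> + scaleC (of_real s * \<i>) \<psi>) = norm (H \<psi> + scaleC \<i> \<psi>)"
proof (rule power2_eq_imp_eq)
  have "s\<^sup>2 = 1"
    using s abs_mult_self_eq[of s] by (simp add: power2_eq_square)
  then show "(norm (H \<psi> + scaleC (of_real s * \<i>) \<psi>))\<^sup>2 = (norm (H \<psi> + scaleC \<i> \<psi>))\<^sup>2"
    using norm_sq_self_adjoint_shift[OF sa \<psi>, of 1] norm_sq_self_adjoint_shift[OF sa \<psi>, of s]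
    by simp
qed simp_all

lemma norm_less_norm_self_adjoint_shift:
  assumes sa: "self_adjoint D H" and \<psi>: "\<psi> \<in> D" "\<psi> \<noteq> 0"
  shows "norm (H \<psi>) < norm (H \<psi> + scaleC \<i> \<psi>)"
proof (rule power_less_imp_less_base)
  show "(norm (H \<psi>))\<^sup>2 < (norm (H \<psi> + scaleC \<i> \<psi>))\<^sup>2"
    using norm_sq_self_adjoint_shift[OF sa \<psi>(1), of 1] \<psi>(2) by simp
qed simp

lemma res_i_shift:
  assumes sa: "self_adjoint D H" and a: "a \<in> D"
  shows "res_i D H (H a + scaleC \<i> a) = a"
  unfolding res_i_def
proof (rule the_equality)
  fix b assume b: "b \<in> D \<and> H b + scaleC \<i> b = H a + scaleC \<i> a"
  have lin: "lin_op D H"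
    using self_adjointD(1)[OF sa] .
  have bD: "b \<in> D" and eq: "H b + scaleC \<i> b = H a + scaleC \<i> a"
    using b by simp_all
  have "H (b - a) + scaleC \<i> (b - a) = (H b + scaleC \<i> b) - (H a + scaleC \<i> a)"
    using lin_op_diff(2)[OF lin bD a] by (simp add: scaleC.scale_right_diff_distrib algebra_simps)
  also have "\<dots> = 0"
    using eq by simp
  finally have "norm (b - a) \<le> 0"
    using norm_le_norm_self_adjoint_shift(1)[OF sa lin_op_diff(1)[OF lin bD a], of 1] by simp
  then show "b = a" by simp
qed (use a in simp)

section \<open>Weakly holomorphic vector-valued functions\<close>

definition strip :: "real \<Rightarrow> complex set" where
  "strip R = {\<theta>. \<bar>Im \<theta>\<bar> < R}"

lemma strip_eq_Int: "strip R = {\<theta>. Im \<theta> < R} \<inter> {\<theta>. Im \<theta> > - R}"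
  unfolding strip_def by auto

lemma open_strip: "open (strip R)"
  unfolding strip_eq_Int by (intro open_Int open_halfspace_Im_lt open_halfspace_Im_gt)

lemma connected_strip: "connected (strip R)"
  unfolding strip_eq_Int
  by (intro convex_connected convex_Int convex_halfspace_Im_lt convex_halfspace_Im_gt)

lemma Reals_subset_strip: "R > 0 \<Longrightarrow> \<real> \<subseteq> strip R"
  unfolding strip_def by (auto elim!: Reals_cases)

lemma mem_strip_if_norm_less: "cmod \<theta> < R \<Longrightarrow> \<theta> \<in> strip R"
  unfolding strip_def using abs_Im_le_cmod[of \<theta>] by simp

lemma cnj_image_strip: "cnj ` strip R = strip R"
  by (auto simp: image_cnj_conv_vimage_cnj strip_def)

lemma islimpt_Reals_zero: "(0::complex) islimpt \<real>"
  unfolding islimpt_approachable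
proof (intro allI impI)
  fix e :: real assume "0 < e"
  then show "\<exists>x'\<in>\<real>. x' \<noteq> (0::complex) \<and> dist x' 0 < e"
    by (intro bexI[where x = "complex_of_real (e / 2)"] conjI) (simp_all add: dist_norm)
qed

lemma holomorphic_eq_zero_if_zero_on_reals:
  assumes hol: "f holomorphic_on strip R" and R: "R > 0"
    and zero: "\<And>t. f (complex_of_real t) = 0" and \<theta>: "\<theta> \<in> strip R"
  shows "f \<theta> = 0"
proof (rule analytic_continuation[OF hol open_strip connected_strip Reals_subset_strip[OF R]])
  show "0 \<in> strip R" using R unfolding strip_def by simp
qed (use zero \<theta> islimpt_Reals_zero in \<open>auto elim!: Reals_cases\<close>)

lemma vholomorphic_on_cinner:
  fixes f :: "complex \<Rightarrow> 'a::chilbert"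
  assumes "vholomorphic_on f S"
  shows "(\<lambda>\<theta>. cinner g (f \<theta>)) holomorphic_on S"
  unfolding holomorphic_on_def field_differentiable_def
proof
  fix z assume "z \<in> S"
  then obtain v where v: "(f has_derivative (\<lambda>h. scaleC h v)) (at z)"
    using assms unfolding vholomorphic_on_def by blast
  have "((\<lambda>\<theta>. cinner g (f \<theta>)) has_derivative (\<lambda>h. cinner g (scaleC h v))) (at z)"
    using bounded_linear.has_derivative[OF bounded_linear_cinner_right v] .
  moreover have "(\<lambda>h. cinner g (scaleC h v)) = (*) (cinner g v)"
    by (rule ext) (simp add: cinner_scaleC_right mult.commute)
  ultimately have "((\<lambda>\<theta>. cinner g (f \<theta>)) has_field_derivative cinner g v) (at z)"
    unfolding has_field_derivative_def by simp
  then have "((\<lambda>\<theta>. cinner g (f \<theta>)) has_field_derivative cinner g v) (at z within S)"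
    by (rule has_field_derivative_at_within)
  then show "\<exists>f'. ((\<lambda>\<theta>. cinner g (f \<theta>)) has_field_derivative f') (at z within S)" ..
qed

lemma weakly_holomorphic_eq_zero_if_zero_on_reals:
  fixes F :: "complex \<Rightarrow> 'a::chilbert"
  assumes R: "R > 0" and hol: "\<And>g. (\<lambda>z. cinner g (F z)) holomorphic_on strip R"
    and zero: "\<And>t. F (complex_of_real t) = 0" and \<theta>: "\<theta> \<in> strip R"
  shows "F \<theta> = 0"
  using holomorphic_eq_zero_if_zero_on_reals[OF hol R _ \<theta>, of "F \<theta>"] zero by simp

lemma Schwarz_Lemma_ball:
  fixes f :: "complex \<Rightarrow> complex"
  assumes r: "r > 0" and hol: "f holomorphic_on ball 0 r" and f0: "f 0 = 0"
    and bound: "\<And>z. norm z < r \<Longrightarrow> norm (f z) < K" and \<theta>: "norm \<theta> < r"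
  shows "norm (f \<theta>) \<le> K * norm \<theta> / r"
proof -
  have K: "K > 0"
    using bound[of 0] r f0 by simp
  have scaled: "norm (of_real r * w) < r" if "norm w < 1" for w :: complex
    using r that by (simp add: norm_mult)
  define g where "g w = f (of_real r * w) / of_real K" for w
  have "f \<circ> (\<lambda>w::complex. of_real r * w) holomorphic_on ball 0 1"
  proof (rule holomorphic_on_compose_gen[OF _ hol])
    show "(\<lambda>w::complex. of_real r * w) holomorphic_on ball 0 1"
      by (rule holomorphic_on_linear)
    show "(\<lambda>w::complex. of_real r * w) ` ball 0 1 \<subseteq> ball 0 r"
      using scaled by (auto simp: dist_norm)
  qed
  then have "g holomorphic_on ball 0 1"
    unfolding g_def o_def using K by (intro holomorphic_on_divide holomorphic_on_const) simp_all
  moreover have "g 0 = 0"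
    by (simp add: g_def f0)
  moreover have "norm (g w) < 1" if "norm w < 1" for w
  proof -
    have "norm (f (of_real r * w)) < K"
      using bound scaled[OF that] .
    then show ?thesis
      using K by (simp add: g_def norm_divide pos_divide_less_eq)
  qed
  moreover have "norm (\<theta> / of_real r) < 1"
    using \<theta> r by (simp add: norm_divide)
  ultimately have "norm (g (\<theta> / of_real r)) \<le> norm (\<theta> / of_real r)"
    by (rule Schwarz_Lemma(1))
  then show ?thesis
    using r K by (simp add: g_def norm_divide field_simps)
qed

lemma weakly_holomorphic_Schwarz:
  fixes F :: "complex \<Rightarrow> 'a::chilbert"
  assumes r: "r > 0" and hol: "\<And>g. (\<lambda>z. cinner g (F z)) holomorphic_on ball 0 r"
    and F0: "F 0 = 0" and bound: "\<And>z. norm z < r \<Longrightarrow> norm (F z) < K" and \<theta>: "norm \<theta> < r"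
  shows "norm (F \<theta>) \<le> K * norm \<theta> / r"
proof (cases "F \<theta> = 0")
  case True
  have "K > 0"
    using bound[of 0] r F0 by simp
  with True r show ?thesis by simp
next
  case False
  have cinner_bound: "cmod (cinner (F \<theta>) (F z)) < norm (F \<theta>) * K" if "norm z < r" for z
  proof -
    have "norm (F \<theta>) * norm (F z) < norm (F \<theta>) * K"
      using bound[OF that] False by simp
    then show ?thesis
      using cinner_Cauchy_Schwarz[of "F \<theta>" "F z"] by linarith
  qed
  have "cmod (cinner (F \<theta>) (F \<theta>)) \<le> norm (F \<theta>) * K * norm \<theta> / r"
    using Schwarz_Lemma_ball[OF r hol[of "F \<theta>"] _ cinner_bound \<theta>] F0 by simp
  moreover have "cmod (cinner (F \<theta>) (F \<theta>)) = norm (F \<theta>) * norm (F \<theta>)"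
    unfolding norm_eq_cinner[symmetric] norm_of_real by (simp add: power2_eq_square)
  ultimately have "norm (F \<theta>) * norm (F \<theta>) \<le> norm (F \<theta>) * (K * norm \<theta> / r)"
    by (simp add: mult.assoc)
  moreover have "norm (F \<theta>) > 0"
    using False by simp
  ultimately show ?thesis
    using mult_le_cancel_left_pos by blast
qed

section \<open>The analytic family \<open>H\<^sub>\<theta>\<close>\<close>

locale analytic_family =
  fixes DH :: "'a::chilbert set" and H :: "'a \<Rightarrow> 'a"
    and DA :: "'a set" and A :: "'a \<Rightarrow> 'a" and U :: "real \<Rightarrow> 'a \<Rightarrow> 'a"
    and R :: real and Hth :: "complex \<Rightarrow> 'a \<Rightarrow> 'a"
  assumes self_adjoint_H: "self_adjoint DH H"
    and exp_itA: "is_exp_itA DA A U"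
    and G1: "condG1 DH H U"
    and G3: "condG3 DH H U R Hth"
begin

lemma lin_op_H: "lin_op DH H"
  using self_adjointD(1)[OF self_adjoint_H] .

lemma R_pos: "R > 0"
  using G3 unfolding condG3_def by simp

lemma U_lin_op: "lin_op UNIV (U t)"
  using exp_itA unfolding is_exp_itA_def by simp

lemma U_add: "U t (x + y) = U t x + U t y"
  using lin_opD(2)[OF U_lin_op] by simp

lemma U_scaleC: "U t (scaleC c x) = scaleC c (U t x)"
  using lin_opD(3)[OF U_lin_op] by simp

lemma U_cinner: "cinner (U t x) (U t y) = cinner x y"
  using exp_itA isometry_preserves_cinner[OF U_lin_op] unfolding is_exp_itA_def by simp

lemma U_zero: "U 0 x = x"
  using exp_itA unfolding is_exp_itA_def by simp

lemma U_inverse: "U t (U (- t) x) = x"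
proof -
  have "U (t + - t) = U t \<circ> U (- t)"
    using exp_itA unfolding is_exp_itA_def by blast
  then show ?thesis
    using U_zero by (metis add.right_inverse comp_apply)
qed

lemma U_maps_DH: "\<psi> \<in> DH \<Longrightarrow> U t \<psi> \<in> DH"
  using G1 unfolding condG1_def by blast

lemma Hth_real: "\<psi> \<in> DH \<Longrightarrow> Hth (complex_of_real t) \<psi> = U t (H (U (- t) \<psi>))"
  using G3 unfolding condG3_def by blast

lemma Hth_zero: "\<psi> \<in> DH \<Longrightarrow> Hth 0 \<psi> = H \<psi>"
  using Hth_real[of \<psi> 0] by (simp add: U_zero)

lemma holomorphic_cinner_Hth:
  "\<psi> \<in> DH \<Longrightarrow> (\<lambda>\<theta>. cinner g (Hth \<theta> \<psi>)) holomorphic_on strip R"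
  using G3 vholomorphic_on_cinner unfolding condG3_def strip_def by blast

lemma Hth_lincomb:
  assumes x: "x \<in> DH" and y: "y \<in> DH" and \<theta>: "\<theta> \<in> strip R"
  shows "Hth \<theta> (scaleC a x + scaleC b y) = scaleC a (Hth \<theta> x) + scaleC b (Hth \<theta> y)"
proof -
  note D = csubspaceD[OF lin_opD(1)[OF lin_op_H]]
  have xy: "scaleC a x + scaleC b y \<in> DH"
    using D(2,3) x y by blast
  define F where
    "F z = Hth z (scaleC a x + scaleC b y) - (scaleC a (Hth z x) + scaleC b (Hth z y))" for z
  have "F \<theta> = 0"
  proof (rule weakly_holomorphic_eq_zero_if_zero_on_reals[OF R_pos _ _ \<theta>])
    fix g
    have "(\<lambda>z. cinner g (Hth z (scaleC a x + scaleC b y))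
        - (a * cinner g (Hth z x) + b * cinner g (Hth z y))) holomorphic_on strip R"
      using holomorphic_cinner_Hth[OF xy] holomorphic_cinner_Hth[OF x] holomorphic_cinner_Hth[OF y]
      by (intro holomorphic_on_diff holomorphic_on_add holomorphic_on_mult holomorphic_on_const)
    then show "(\<lambda>z. cinner g (F z)) holomorphic_on strip R"
      by (simp add: F_def cinner_diff_right cinner_add_right cinner_scaleC_right)
  next
    fix t
    have "H (U (- t) (scaleC a x + scaleC b y))
        = scaleC a (H (U (- t) x)) + scaleC b (H (U (- t) y))"
      using lin_opD(2,3)[OF lin_op_H] D(3) U_maps_DH[OF x] U_maps_DH[OF y]
      by (simp add: U_add U_scaleC)
    then show "F (complex_of_real t) = 0"
      by (simp add: F_def Hth_real[OF xy] Hth_real[OF x] Hth_real[OF y] U_add U_scaleC)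
  qed
  then show ?thesis
    by (simp add: F_def)
qed

lemma lin_op_Hth:
  assumes \<theta>: "\<theta> \<in> strip R"
  shows "lin_op DH (Hth \<theta>)"
  unfolding lin_op_def
proof (intro conjI ballI allI)
  show "csubspace DH"
    using lin_opD(1)[OF lin_op_H] .
  show "Hth \<theta> (x + y) = Hth \<theta> x + Hth \<theta> y" if "x \<in> DH" "y \<in> DH" for x y
    using Hth_lincomb[OF that \<theta>, of 1 1] by simp
  show "Hth \<theta> (scaleC c x) = scaleC c (Hth \<theta> x)" if "x \<in> DH" for c x
    using Hth_lincomb[OF that that \<theta>, of c 0] by simp
qed

text \<open>For real \<open>\<theta> = t\<close> both sides equal \<open>\<langle>H U(-t)\<psi>, U(-t)\<phi>\<rangle>\<close>; the conjugate of the
  right-hand side is holomorphic in \<open>\<theta>\<close> because \<open>H\<^bsub>cnj \<theta>\<^esub>\<close> enters through \<open>cnj \<circ> f \<circ> cnj\<close>.\<close>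

lemma cinner_Hth_cnj:
  assumes \<psi>: "\<psi> \<in> DH" and \<phi>: "\<phi> \<in> DH" and \<theta>: "\<theta> \<in> strip R"
  shows "cinner (Hth \<theta> \<psi>) \<phi> = cinner \<psi> (Hth (cnj \<theta>) \<phi>)"
proof -
  define G where "G z = cinner \<phi> (Hth z \<psi>) - cnj (cinner \<psi> (Hth (cnj z) \<phi>))" for z
  have "cnj \<circ> (\<lambda>z. cinner \<psi> (Hth z \<phi>)) \<circ> cnj holomorphic_on strip R"
    by (rule holomorphic_on_compose_cnj_cnj)
      (simp_all add: cnj_image_strip holomorphic_cinner_Hth[OF \<phi>] open_strip)
  then have "G holomorphic_on strip R"
    unfolding G_def o_def by (intro holomorphic_on_diff holomorphic_cinner_Hth[OF \<psi>])
  moreover have "G (complex_of_real t) = 0" for t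
  proof -
    define \<psi>' \<phi>' where "\<psi>' = U (- t) \<psi>" and "\<phi>' = U (- t) \<phi>"
    have D': "\<psi>' \<in> DH" "\<phi>' \<in> DH"
      unfolding \<psi>'_def \<phi>'_def using U_maps_DH \<psi> \<phi> by auto
    have "cinner \<phi> (U t (H \<psi>')) = cinner (U t \<phi>') (U t (H \<psi>'))"
      unfolding \<phi>'_def U_inverse ..
    also have "\<dots> = cinner (H \<phi>') \<psi>'"
      using self_adjoint_symmetric[OF self_adjoint_H D'(2) D'(1)] by (simp add: U_cinner)
    also have "\<dots> = cinner (U t (H \<phi>')) (U t \<psi>')"
      by (simp add: U_cinner)
    also have "\<dots> = cnj (cinner \<psi> (U t (H \<phi>')))"
      unfolding \<psi>'_def U_inverse by (rule cinner_commute)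
    finally show ?thesis
      unfolding G_def \<psi>'_def \<phi>'_def using Hth_real[OF \<psi>] Hth_real[OF \<phi>] by simp
  qed
  ultimately have "G \<theta> = 0"
    using holomorphic_eq_zero_if_zero_on_reals[OF _ R_pos _ \<theta>] by blast
  then show ?thesis
    unfolding G_def by (metis cinner_commute complex_cnj_cnj eq_iff_diff_eq_0)
qed


lemma norm_Hth_le_G4_M:
  assumes G4: "condG4 DH H R Hth" and \<psi>: "\<psi> \<in> DH" and \<theta>: "cmod \<theta> < R"
  shows "norm (Hth \<theta> \<psi>) \<le> G4_M DH H R Hth * norm (H \<psi> + scaleC \<i> \<psi>)"
proof -
  define n where "n = norm (H \<psi> + scaleC \<i> \<psi>)"
  have lin: "lin_op DH (Hth \<theta>)"
    using lin_op_Hth[OF mem_strip_if_norm_less[OF \<theta>]] .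
  have "norm (Hth \<theta> \<psi>) \<le> G4_M DH H R Hth * n"
  proof (cases "n = 0")
    case True
    then have "\<psi> = 0"
      using norm_le_norm_self_adjoint_shift(1)[OF self_adjoint_H \<psi>, of 1] by (simp add: n_def)
    then show ?thesis
      using lin_op_zero[OF lin] True by simp
  next
    case False
    then have n: "n > 0"
      by (simp add: n_def)
    define \<psi>1 where "\<psi>1 = scaleC (of_real (1 / n)) \<psi>"
    have \<psi>1: "\<psi>1 \<in> DH"
      unfolding \<psi>1_def using csubspaceD(3)[OF lin_opD(1)[OF lin_op_H] \<psi>] .
    have "H \<psi>1 + scaleC \<i> \<psi>1 = scaleC (of_real (1 / n)) (H \<psi> + scaleC \<i> \<psi>)"
      unfolding \<psi>1_def using lin_opD(3)[OF lin_op_H \<psi>] by (simp add: scaleC_add_right mult.commute)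
    then have "norm (H \<psi>1 + scaleC \<i> \<psi>1) = 1"
      using n by (simp add: norm_scaleC norm_divide n_def)
    moreover have "res_i DH H (H \<psi>1 + scaleC \<i> \<psi>1) = \<psi>1"
      using res_i_shift[OF self_adjoint_H \<psi>1] .
    ultimately have "norm (Hth \<theta> \<psi>1) \<in> G4_set DH H R Hth"
      unfolding G4_set_def using \<theta>
      by (intro CollectI exI[where x = \<theta>] exI[where x = "H \<psi>1 + scaleC \<i> \<psi>1"]) simp
    then have "norm (Hth \<theta> \<psi>1) \<le> G4_M DH H R Hth"
      unfolding G4_M_def using G4 unfolding condG4_def by (rule cSup_upper)
    moreover have "norm (Hth \<theta> \<psi>1) = norm (Hth \<theta> \<psi>) / n"
      unfolding \<psi>1_def using lin_opD(3)[OF lin \<psi>] n by (simp add: norm_scaleC norm_divide)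
    ultimately show ?thesis
      using n by (simp add: pos_divide_le_eq)
  qed
  then show ?thesis
    unfolding n_def .
qed

lemma norm_Hth_minus_H_le:
  assumes G4: "condG4 DH H R Hth" and \<psi>: "\<psi> \<in> DH" and \<theta>: "cmod \<theta> < R"
  shows "norm (Hth \<theta> \<psi> - H \<psi>)
           \<le> 2 * max 1 (G4_M DH H R Hth) * cmod \<theta> / R * norm (H \<psi> + scaleC \<i> \<psi>)"
proof (cases "\<psi> = 0")
  case True
  then show ?thesis
    using lin_op_zero[OF lin_op_Hth[OF mem_strip_if_norm_less[OF \<theta>]]] lin_op_zero[OF lin_op_H]
    by simp
next
  case False
  define M n where "M = max 1 (G4_M DH H R Hth)" and "n = norm (H \<psi> + scaleC \<i> \<psi>)"
  have Hn: "norm (H \<psi>) < n"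
    unfolding n_def using norm_less_norm_self_adjoint_shift[OF self_adjoint_H \<psi> False] .
  have "n \<le> M * n"
    unfolding M_def n_def by (simp add: mult_le_cancel_right1)
  have bound: "norm (Hth z \<psi> - H \<psi>) < 2 * (M * n)" if "cmod z < R" for z
  proof -
    have "norm (Hth z \<psi>) \<le> G4_M DH H R Hth * n"
      using norm_Hth_le_G4_M[OF G4 \<psi> that] unfolding n_def .
    also have "\<dots> \<le> M * n"
      unfolding M_def by (intro mult_right_mono) (simp_all add: n_def)
    finally show ?thesis
      using norm_triangle_ineq4[of "Hth z \<psi>" "H \<psi>"] Hn \<open>n \<le> M * n\<close> by linarith
  qed
  have ball: "ball 0 R \<subseteq> strip R"
    using mem_strip_if_norm_less by (auto simp: dist_norm)
  have "(\<lambda>z. cinner g (Hth z \<psi> - H \<psi>)) holomorphic_on ball 0 R" for g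
    unfolding cinner_diff_right
    by (intro holomorphic_on_diff holomorphic_on_const
        holomorphic_on_subset[OF holomorphic_cinner_Hth[OF \<psi>] ball])
  then have "norm (Hth \<theta> \<psi> - H \<psi>) \<le> 2 * (M * n) * cmod \<theta> / R"
    using weakly_holomorphic_Schwarz[where F = "\<lambda>z. Hth z \<psi> - H \<psi>", OF R_pos _ _ bound \<theta>] Hth_zero[OF \<psi>] by simp
  then show ?thesis
    unfolding M_def n_def using R_pos by (simp add: field_simps)
qed

end

section \<open>Perturbations of self-adjoint operators\<close>

text \<open>A Kato--Rellich type argument: \<open>T + is = (1 + (T - H)(H + is)\<^sup>-\<^sup>1)(H + is)\<close>, and the
  first factor is onto by Banach's fixed point theorem, since \<open>\<parallel>(H + is)\<psi>\<parallel> = \<parallel>(H + i)\<psi>\<parallel>\<close>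
  for \<open>|s| = 1\<close>.\<close>

lemma perturbed_shift_surj:
  fixes D :: "'a::chilbert set"
  assumes sa: "self_adjoint D H" and lin: "lin_op D T"
    and bound: "\<And>\<psi>. \<psi> \<in> D \<Longrightarrow> norm (T \<psi> - H \<psi>) \<le> q * norm (H \<psi> + scaleC \<i> \<psi>)"
    and q: "0 \<le> q" "q < 1" and s: "\<bar>s\<bar> = 1"
  shows "\<exists>\<psi>\<in>D. T \<psi> + scaleC (of_real s * \<i>) \<psi> = y"
proof -
  define c where "c = complex_of_real s * \<i>"
  have linH: "lin_op D H"
    using self_adjointD(1)[OF sa] .
  have "s \<noteq> 0"
    using s by auto
  then obtain Rs where Rs: "\<And>x. Rs x \<in> D" and HRs: "\<And>x. H (Rs x) + scaleC c (Rs x) = x"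
    unfolding c_def by (rule self_adjoint_shift_right_inverse[OF sa]) blast
  define F where "F x = y - (T (Rs x) - H (Rs x))" for x
  have "dist (F a) (F b) \<le> q * dist a b" for a b
  proof -
    define d where "d = Rs a - Rs b"
    have dD: "d \<in> D"
      unfolding d_def using lin_op_diff(1)[OF linH Rs Rs] .
    have "H d + scaleC c d = (H (Rs a) + scaleC c (Rs a)) - (H (Rs b) + scaleC c (Rs b))"
      unfolding d_def
      by (simp add: lin_op_diff(2)[OF linH Rs Rs] scaleC.scale_right_diff_distrib algebra_simps)
    then have "H d + scaleC c d = a - b"
      by (simp add: HRs)
    moreover have "F a - F b = - (T d - H d)"
      unfolding F_def d_def
      by (simp add: lin_op_diff(2)[OF lin Rs Rs] lin_op_diff(2)[OF linH Rs Rs] algebra_simps)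
    ultimately show ?thesis
      using bound[OF dD] norm_self_adjoint_shift_unit[OF sa dD s]
      by (simp add: c_def dist_norm norm_minus_commute)
  qed
  then have "\<exists>!x. F x = x"
    by (intro banach_fix_type[OF q]) blast
  then obtain x where x: "F x = x"
    by blast
  have "T (Rs x) + scaleC c (Rs x) = (y - F x) + (H (Rs x) + scaleC c (Rs x))"
    unfolding F_def by (simp add: algebra_simps)
  then have "T (Rs x) + scaleC c (Rs x) = y"
    by (simp add: x HRs)
  then show ?thesis
    using Rs unfolding c_def by blast
qed

text \<open>For \<open>\<phi>\<close> in the domain of \<open>T\<^sup>*\<close> choose \<open>\<psi>\<^sub>0\<close> with \<open>(S - i)\<psi>\<^sub>0 = (T\<^sup>* - i)\<phi>\<close>; then
  \<open>\<phi> - \<psi>\<^sub>0\<close> is orthogonal to the range of \<open>T + i\<close>, which is everything.\<close>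

lemma adjoint_eq_if_shifts_surj:
  fixes D :: "'a::chilbert set"
  assumes dense: "closure D = UNIV"
    and adj: "\<And>\<psi> \<phi>. \<psi> \<in> D \<Longrightarrow> \<phi> \<in> D \<Longrightarrow> cinner (T \<psi>) \<phi> = cinner \<psi> (S \<phi>)"
    and T_surj: "\<And>y. \<exists>\<psi>\<in>D. T \<psi> + scaleC \<i> \<psi> = y"
    and S_surj: "\<And>y. \<exists>\<psi>\<in>D. S \<psi> - scaleC \<i> \<psi> = y"
  shows "adj_dom D T = D \<and> (\<forall>\<phi>\<in>D. adj_op D T \<phi> = S \<phi>)"
proof -
  have D_adj: "\<phi> \<in> adj_dom D T \<and> adj_op D T \<phi> = S \<phi>" if \<phi>: "\<phi> \<in> D" for \<phi>
    using adj_op_eqI[OF dense, of T \<phi> "S \<phi>"] adj[OF _ \<phi>] by blast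
  have "\<phi> \<in> D" if \<phi>: "\<phi> \<in> adj_dom D T" for \<phi>
  proof -
    obtain \<eta> where \<eta>: "\<And>\<psi>. \<psi> \<in> D \<Longrightarrow> cinner (T \<psi>) \<phi> = cinner \<psi> \<eta>"
      using \<phi> unfolding adj_dom_def by blast
    obtain \<psi>0 where \<psi>0: "\<psi>0 \<in> D" and S\<psi>0: "S \<psi>0 - scaleC \<i> \<psi>0 = \<eta> - scaleC \<i> \<phi>"
      using S_surj by blast
    obtain \<psi> where \<psi>: "\<psi> \<in> D" and T\<psi>: "T \<psi> + scaleC \<i> \<psi> = \<phi> - \<psi>0"
      using T_surj by blast
    have "cinner (\<phi> - \<psi>0) (\<phi> - \<psi>0) = cinner (T \<psi> + scaleC \<i> \<psi>) (\<phi> - \<psi>0)"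
      by (simp add: T\<psi>)
    also have "\<dots> = cinner \<psi> \<eta> - cinner \<psi> (S \<psi>0) - \<i> * cinner \<psi> \<phi> + \<i> * cinner \<psi> \<psi>0"
      by (simp add: cinner_add_left cinner_diff_right cinner_scaleC_left \<eta>[OF \<psi>] adj[OF \<psi> \<psi>0]
          algebra_simps)
    also have "S \<psi>0 = \<eta> - scaleC \<i> \<phi> + scaleC \<i> \<psi>0"
      using S\<psi>0 by (simp add: algebra_simps)
    finally have "cinner (\<phi> - \<psi>0) (\<phi> - \<psi>0) = 0"
      by (simp add: cinner_add_right cinner_diff_right cinner_scaleC_right algebra_simps)
    then show ?thesis
      using \<psi>0 by simp
  qed
  with D_adj show ?thesis
    by blast
qed

lemma small_coupling:
  fixes M R :: real
  assumes R: "R > 0" and \<theta>: "cmod \<theta> < 1 / (3 * (max 1 M / R))"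
  shows "cmod \<theta> < R" and "2 * max 1 M * cmod \<theta> / R < 1"
proof -
  have M: "0 \<le> max 1 M * cmod \<theta>" "cmod \<theta> \<le> max 1 M * cmod \<theta>"
    by (simp_all add: mult_le_cancel_right1)
  have "3 * (max 1 M * cmod \<theta>) < R"
    using \<theta> R by (simp add: field_simps)
  with M R show "cmod \<theta> < R" and "2 * max 1 M * cmod \<theta> / R < 1"
    by (simp_all add: divide_less_eq)
qed

theorem mainTheorem6:
  fixes DH DA :: "'a::{chilbert, second_countable_topology} set"
    and H A :: "'a \<Rightarrow> 'a"
    and U :: "real \<Rightarrow> 'a \<Rightarrow> 'a"
    and R :: real
    and Hth :: "complex \<Rightarrow> 'a \<Rightarrow> 'a"
    and \<theta> :: complex
  assumes "self_adjoint DH H" and "self_adjoint DA A"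
    and "is_exp_itA DA A U"
    and "condG1 DH H U"
    and "condG2 DH H DA A"
    and "condG3 DH H U R Hth"
    and "condG4 DH H R Hth"
    and "cmod \<theta> < 1 / (3 * (max 1 (G4_M DH H R Hth) / R))"
  shows "adj_dom DH (Hth \<theta>) = DH \<and> (\<forall>\<phi>\<in>DH. adj_op DH (Hth \<theta>) \<phi> = Hth (cnj \<theta>) \<phi>)"
proof -
  interpret analytic_family DH H DA A U R Hth
    using assms(1,3,4,6) by unfold_locales
  define q where "q = 2 * max 1 (G4_M DH H R Hth) * cmod \<theta> / R"
  have \<theta>: "cmod \<theta> < R" and q: "0 \<le> q" "q < 1"
    using small_coupling[OF R_pos assms(8)] R_pos unfolding q_def by auto
  have bound: "norm (Hth \<theta>' \<psi> - H \<psi>) \<le> q * norm (H \<psi> + scaleC \<i> \<psi>)"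
    if "cmod \<theta>' = cmod \<theta>" "\<psi> \<in> DH" for \<theta>' \<psi>
    using norm_Hth_minus_H_le[OF assms(7) that(2), of \<theta>'] that(1) \<theta> unfolding q_def by simp
  have strip: "\<theta> \<in> strip R" "cnj \<theta> \<in> strip R"
    using \<theta> by (simp_all add: mem_strip_if_norm_less)
  show ?thesis
  proof (rule adjoint_eq_if_shifts_surj[OF self_adjointD(2)[OF self_adjoint_H]])
    show "cinner (Hth \<theta> \<psi>) \<phi> = cinner \<psi> (Hth (cnj \<theta>) \<phi>)" if "\<psi> \<in> DH" "\<phi> \<in> DH" for \<psi> \<phi>
      using cinner_Hth_cnj[OF that strip(1)] .
    show "\<exists>\<psi>\<in>DH. Hth \<theta> \<psi> + scaleC \<i> \<psi> = y" for y
      using perturbed_shift_surj[OF self_adjoint_H lin_op_Hth[OF strip(1)] bound[OF refl] q,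
          where s = 1] by simp
    show "\<exists>\<psi>\<in>DH. Hth (cnj \<theta>) \<psi> - scaleC \<i> \<psi> = y" for y
      using perturbed_shift_surj[OF self_adjoint_H lin_op_Hth[OF strip(2)] bound[OF complex_mod_cnj] q,
          where s = "- 1"] by simp
  qed
qed

end
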